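(* Let $\alpha,\beta,\gamma\in\Bbbk^n$. (1) Let $\lambda\in(\Bbbk^\times)^n$ and set $\alpha'_i=\lambda_i\lambda_{i-1}^{-1}\alpha_i$, $\beta'_i=\lambda_{i+1}\lambda_{i-1}^{-1}\beta_i$, $\gamma'_i=\lambda_{i-1}^{-1}\gamma_i$ for all $i$. Then the linear map $\phi_\lambda$ with $\phi_\lambda(e_i)=e_i$, $\phi_\lambda(u_i)=\lambda_iu_i$, $\phi_\lambda(d_i)=d_i$ extends to an isomorphism $\mathcal H(\alpha,\beta,\gamma)\to\mathcal H(\alpha',\beta',\gamma')$. (2) Set $\alpha'_i=\alpha_{i-1}$, $\beta'_i=\beta_{i-1}$, $\gamma'_i=\gamma_{i-1}$. Then the linear map $\psi$ with $\psi(e_i)=e_{i+1}$, $\psi(u_i)=u_{i+1}$, $\psi(d_i)=d_{i+1}$ extends to an isomorphism $\mathcal H(\alpha,\beta,\gamma)\to\mathcal H(\alpha',\beta',\gamma')$. (3) Suppose $\beta_i\neq0$ for all $i$, and set $\alpha'_i=-\beta_{n-i-1}^{-1}\alpha_{n-i-1}$, $\beta'_i=\beta_{n-i-1}^{-1}$, $\gamma'_i=-\beta_{n-i-1}^{-1}\gamma_{n-i-1}$. Then the linear map $\pi$ with $\pi(e_i)=e_{n-i}$, $\pi(u_i)=d_{n-i-1}$, $\pi(d_i)=u_{n-i-1}$ extends to an isomorphism $\mathcal H(\alpha,\beta,\gamma)\to\mathcal H(\alpha',\beta',\gamma')$.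
   Context: $\Bbbk$ is an algebraically closed field of characteristic zero. Fix $n\ge1$; indices mod $n$, $Q_0=\{0,\dots,n-1\}$. $Q$ is the quiver with vertices $Q_0$ and arrows $u_i:i\to i+1$, $d_i:i+1\to i$; paths are written left to right, $e_i$ is the trivial path at $i$. $\mathcal H(\alpha,\beta,\gamma)$ is $\Bbbk Q$ modulo the relations $d_{i-1}u_{i-1}u_i=\alpha_iu_id_iu_i+\beta_iu_iu_{i+1}d_{i+1}+\gamma_iu_i$ and $d_id_{i-1}u_{i-1}=\alpha_id_iu_id_i+\beta_iu_{i+1}d_{i+1}d_i+\gamma_id_i$ for all $i\in Q_0$. *)

theory Defs
  imports "HOL-Algebra.QuotRing" "HOL-Computational_Algebra.Polynomial"
begin

text \<open>Vertices are 0,...,n-1; indices are read mod n.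
  Arrows: U i = u_i : i -> i+1, D i = d_i : i+1 -> i (for i < n).\<close>

definition nx :: "nat \<Rightarrow> nat \<Rightarrow> nat" where "nx n i = (i + 1) mod n"
definition pr :: "nat \<Rightarrow> nat \<Rightarrow> nat" where "pr n i = (i + n - 1) mod n"

datatype arr = U nat | D nat

fun asrc :: "nat \<Rightarrow> arr \<Rightarrow> nat" where
  "asrc n (U i) = i"
| "asrc n (D i) = nx n i"

fun atgt :: "nat \<Rightarrow> arr \<Rightarrow> nat" where
  "atgt n (U i) = nx n i"
| "atgt n (D i) = i"

fun aidx :: "arr \<Rightarrow> nat" where
  "aidx (U i) = i"
| "aidx (D i) = i"

text \<open>Paths: trivial paths e_i, or nonempty composable lists of arrows,
  written left to right.\<close>
datatype path = Triv nat | Path "arr list"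

fun composable :: "nat \<Rightarrow> arr list \<Rightarrow> bool" where
  "composable n (a # b # as) = (atgt n a = asrc n b \<and> composable n (b # as))"
| "composable n _ = True"

fun valid_path :: "nat \<Rightarrow> path \<Rightarrow> bool" where
  "valid_path n (Triv i) = (i < n)"
| "valid_path n (Path as) = (as \<noteq> [] \<and> (\<forall>a\<in>set as. aidx a < n) \<and> composable n as)"

fun psrc :: "nat \<Rightarrow> path \<Rightarrow> nat" where
  "psrc n (Triv i) = i"
| "psrc n (Path as) = asrc n (hd as)"

fun ptgt :: "nat \<Rightarrow> path \<Rightarrow> nat" where
  "ptgt n (Triv i) = i"
| "ptgt n (Path as) = atgt n (last as)"

text \<open>Concatenation of paths (left to right); None means the product is zero.\<close>
fun pcat :: "path \<Rightarrow> path \<Rightarrow> path" where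
  "pcat (Triv i) q = q"
| "pcat p (Triv j) = p"
| "pcat (Path as) (Path bs) = Path (as @ bs)"

definition pcomp :: "nat \<Rightarrow> path \<Rightarrow> path \<Rightarrow> path option" where
  "pcomp n p q = (if ptgt n p = psrc n q then Some (pcat p q) else None)"

definition kQ_carrier :: "nat \<Rightarrow> (path \<Rightarrow> 'a::field) set" where
  "kQ_carrier n = {f. finite {p. f p \<noteq> 0} \<and> (\<forall>p. f p \<noteq> 0 \<longrightarrow> valid_path n p)}"

definition kQ_mult :: "nat \<Rightarrow> (path \<Rightarrow> 'a::field) \<Rightarrow> (path \<Rightarrow> 'a) \<Rightarrow> (path \<Rightarrow> 'a)" where
  "kQ_mult n f g = (\<lambda>p. \<Sum>(q, r) \<in> {(q, r). f q \<noteq> 0 \<and> g r \<noteq> 0 \<and> pcomp n q r = Some p}.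
                        f q * g r)"

definition kQ_one :: "nat \<Rightarrow> path \<Rightarrow> 'a::field" where
  "kQ_one n = (\<lambda>p. case p of Triv i \<Rightarrow> (if i < n then 1 else 0) | Path _ \<Rightarrow> 0)"

definition kQ :: "nat \<Rightarrow> (path \<Rightarrow> 'a::field) ring" where
  "kQ n = \<lparr>carrier = kQ_carrier n, monoid.mult = kQ_mult n, monoid.one = kQ_one n,
           ring.zero = (\<lambda>p. 0), ring.add = (\<lambda>f g p. f p + g p)\<rparr>"

definition bas :: "path \<Rightarrow> path \<Rightarrow> 'a::field" where
  "bas p = (\<lambda>q. if q = p then 1 else 0)"

definition sc :: "'a::field \<Rightarrow> (path \<Rightarrow> 'a) \<Rightarrow> path \<Rightarrow> 'a" where
  "sc c f = (\<lambda>p. c * f p)"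

definition ev :: "nat \<Rightarrow> path \<Rightarrow> 'a::field" where "ev i = bas (Triv i)"
definition uv :: "nat \<Rightarrow> path \<Rightarrow> 'a::field" where "uv i = bas (Path [U i])"
definition dv :: "nat \<Rightarrow> path \<Rightarrow> 'a::field" where "dv i = bas (Path [D i])"

text \<open>A product of composable arrows in kQ is the basis element of the concatenated path.\<close>
definition rel1 :: "nat \<Rightarrow> (nat \<Rightarrow> 'a::field) \<Rightarrow> (nat \<Rightarrow> 'a) \<Rightarrow> (nat \<Rightarrow> 'a) \<Rightarrow> nat \<Rightarrow> path \<Rightarrow> 'a" where
  "rel1 n \<alpha> \<beta> \<gamma> i = (\<lambda>p.
      bas (Path [D (pr n i), U (pr n i), U i]) p
      - \<alpha> i * bas (Path [U i, D i, U i]) p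
      - \<beta> i * bas (Path [U i, U (nx n i), D (nx n i)]) p
      - \<gamma> i * bas (Path [U i]) p)"

definition rel2 :: "nat \<Rightarrow> (nat \<Rightarrow> 'a::field) \<Rightarrow> (nat \<Rightarrow> 'a) \<Rightarrow> (nat \<Rightarrow> 'a) \<Rightarrow> nat \<Rightarrow> path \<Rightarrow> 'a" where
  "rel2 n \<alpha> \<beta> \<gamma> i = (\<lambda>p.
      bas (Path [D i, D (pr n i), U (pr n i)]) p
      - \<alpha> i * bas (Path [D i, U i, D i]) p
      - \<beta> i * bas (Path [U (nx n i), D (nx n i), D i]) p
      - \<gamma> i * bas (Path [D i]) p)"

definition rels :: "nat \<Rightarrow> (nat \<Rightarrow> 'a::field) \<Rightarrow> (nat \<Rightarrow> 'a) \<Rightarrow> (nat \<Rightarrow> 'a) \<Rightarrow> (path \<Rightarrow> 'a) set" where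
  "rels n \<alpha> \<beta> \<gamma> = {rel1 n \<alpha> \<beta> \<gamma> i | i. i < n} \<union> {rel2 n \<alpha> \<beta> \<gamma> i | i. i < n}"

definition Irel :: "nat \<Rightarrow> (nat \<Rightarrow> 'a::field) \<Rightarrow> (nat \<Rightarrow> 'a) \<Rightarrow> (nat \<Rightarrow> 'a) \<Rightarrow> (path \<Rightarrow> 'a) set" where
  "Irel n \<alpha> \<beta> \<gamma> = genideal (kQ n) (rels n \<alpha> \<beta> \<gamma>)"

definition HH :: "nat \<Rightarrow> (nat \<Rightarrow> 'a::field) \<Rightarrow> (nat \<Rightarrow> 'a) \<Rightarrow> (nat \<Rightarrow> 'a) \<Rightarrow> (path \<Rightarrow> 'a) set ring" where
  "HH n \<alpha> \<beta> \<gamma> = kQ n Quot Irel n \<alpha> \<beta> \<gamma>"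

definition cls :: "nat \<Rightarrow> (nat \<Rightarrow> 'a::field) \<Rightarrow> (nat \<Rightarrow> 'a) \<Rightarrow> (nat \<Rightarrow> 'a) \<Rightarrow> (path \<Rightarrow> 'a) \<Rightarrow> (path \<Rightarrow> 'a) set" where
  "cls n \<alpha> \<beta> \<gamma> x = Irel n \<alpha> \<beta> \<gamma> +>\<^bsub>kQ n\<^esub> x"

text \<open>The assignment e_i |-> E i, u_i |-> Uu i, d_i |-> Dd i (elements of kQ, taken
  in H(alpha',beta',gamma')) extends to an isomorphism of k-algebras
  H(alpha,beta,gamma) -> H(alpha',beta',gamma'): a ring isomorphism that is
  k-linear (i.e. compatible with the structure maps c |-> c 1) and takes the
  prescribed values on the generators.\<close>
definition extends_to_iso ::
  "nat \<Rightarrow> (nat \<Rightarrow> 'a::field) \<Rightarrow> (nat \<Rightarrow> 'a) \<Rightarrow> (nat \<Rightarrow> 'a) \<Rightarrow>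
   (nat \<Rightarrow> 'a) \<Rightarrow> (nat \<Rightarrow> 'a) \<Rightarrow> (nat \<Rightarrow> 'a) \<Rightarrow>
   (nat \<Rightarrow> path \<Rightarrow> 'a) \<Rightarrow> (nat \<Rightarrow> path \<Rightarrow> 'a) \<Rightarrow> (nat \<Rightarrow> path \<Rightarrow> 'a) \<Rightarrow> bool" where
  "extends_to_iso n \<alpha> \<beta> \<gamma> \<alpha>' \<beta>' \<gamma>' E Uu Dd \<longleftrightarrow>
     (\<exists>h. h \<in> ring_iso (HH n \<alpha> \<beta> \<gamma>) (HH n \<alpha>' \<beta>' \<gamma>') \<and>
          (\<forall>c. h (cls n \<alpha> \<beta> \<gamma> (sc c (kQ_one n))) = cls n \<alpha>' \<beta>' \<gamma>' (sc c (kQ_one n))) \<and>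
          (\<forall>i<n. h (cls n \<alpha> \<beta> \<gamma> (ev i)) = cls n \<alpha>' \<beta>' \<gamma>' (E i)) \<and>
          (\<forall>i<n. h (cls n \<alpha> \<beta> \<gamma> (uv i)) = cls n \<alpha>' \<beta>' \<gamma>' (Uu i)) \<and>
          (\<forall>i<n. h (cls n \<alpha> \<beta> \<gamma> (dv i)) = cls n \<alpha>' \<beta>' \<gamma>' (Dd i)))"

end

theory Submission
  imports Defs
begin

text \<open>A quiver automorphism \<sigma> together with nonzero weights w on the arrows induces the
  automorphism p \<mapsto> w(p) \<sigma>(p) of kQ, where w(p) is the product of the weights along p.
  If it sends every defining relation of H(\<alpha>,\<beta>,\<gamma>) to a nonzero multiple of a defining
  relation of H(\<alpha>',\<beta>',\<gamma>') and every relation of the latter arises in this way, it maps the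
  one relation ideal onto the other and descends to an isomorphism of the quotients.
  The three maps of the lemma are of this kind: \<sigma> is the identity with weight \<lambda> i on u i,
  the rotation i \<mapsto> i+1, and the reflection i \<mapsto> -i exchanging the u and d arrows,
  respectively; checking the relations is then a direct computation.\<close>

section \<open>The path algebra\<close>

lemma kQ_simps [simp]:
  "carrier (kQ n) = kQ_carrier n"
  "x \<otimes>\<^bsub>kQ n\<^esub> y = kQ_mult n x y"
  "\<one>\<^bsub>kQ n\<^esub> = kQ_one n"
  "\<zero>\<^bsub>kQ n\<^esub> = (\<lambda>p. 0)"
  "x \<oplus>\<^bsub>kQ n\<^esub> y = (\<lambda>p. x p + y p)"
  by (simp_all add: kQ_def)

lemma kQ_carrier_add:
  assumes "f \<in> kQ_carrier n" "g \<in> kQ_carrier n"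
  shows "(\<lambda>p. f p + g p) \<in> kQ_carrier n"
proof -
  have "{p. f p + g p \<noteq> 0} \<subseteq> {p. f p \<noteq> 0} \<union> {p. g p \<noteq> 0}" by auto
  then show ?thesis using assms unfolding kQ_carrier_def
    by (auto intro: finite_subset)
qed

lemma kQ_one_carrier: "kQ_one n \<in> kQ_carrier n"
proof -
  have "{p. kQ_one n p \<noteq> (0::'a::field)} \<subseteq> Triv ` {..<n}"
  proof
    fix p assume "p \<in> {p. kQ_one n p \<noteq> (0::'a)}"
    then show "p \<in> Triv ` {..<n}" by (cases p) (auto simp: kQ_one_def split: if_splits)
  qed
  moreover have "kQ_one n p \<noteq> (0::'a) \<Longrightarrow> valid_path n p" for p
    by (cases p) (auto simp: kQ_one_def split: if_splits)
  ultimately show ?thesis unfolding kQ_carrier_def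
    by (auto intro: finite_subset)
qed

lemma sc_one [simp]: "sc 1 f = f"
  by (simp add: sc_def)

lemma sc_carrier: "f \<in> kQ_carrier n \<Longrightarrow> sc c f \<in> kQ_carrier n"
  unfolding kQ_carrier_def sc_def
  by (auto intro: finite_subset[of _ "{p. f p \<noteq> 0}"])

lemma asrc_less: "0 < n \<Longrightarrow> aidx a < n \<Longrightarrow> asrc n a < n"
  by (cases a) (auto simp: nx_def)

lemma psrc_less: "0 < n \<Longrightarrow> valid_path n p \<Longrightarrow> psrc n p < n"
  by (cases p) (auto intro!: asrc_less)

lemma kQ_mult_sc_one:
  assumes n: "0 < n" and f: "f \<in> kQ_carrier n"
  shows "kQ_mult n (sc c (kQ_one n)) f = sc c f"
proof
  fix p
  show "kQ_mult n (sc c (kQ_one n)) f p = sc c f p"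
  proof (cases "c \<noteq> 0 \<and> f p \<noteq> 0")
    case True
    then have p: "valid_path n p" using f unfolding kQ_carrier_def by auto
    have "{(q, r). sc c (kQ_one n) q \<noteq> 0 \<and> f r \<noteq> 0 \<and> pcomp n q r = Some p}
        = {(Triv (psrc n p), p)}"
      using True psrc_less[OF n p]
      by (auto simp: sc_def kQ_one_def pcomp_def split: path.splits if_splits)
    then show ?thesis by (simp add: kQ_mult_def sc_def kQ_one_def psrc_less[OF n p])
  next
    case False
    then have "{(q, r). sc c (kQ_one n) q \<noteq> 0 \<and> f r \<noteq> 0 \<and> pcomp n q r = Some p} = {}"
      by (auto simp: sc_def kQ_one_def pcomp_def split: path.splits if_splits)
    then show ?thesis using False by (simp only: kQ_mult_def) (auto simp: sc_def)
  qed
qed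

lemma sc_mem_genideal:
  assumes n: "0 < n" and r: "r \<in> S"
  shows "sc c r \<in> genideal (kQ n) S"
  unfolding genideal_def
proof (rule InterI, clarify)
  fix J assume J: "ideal J (kQ n)" "S \<subseteq> J"
  interpret ideal J "kQ n" by (rule J(1))
  have "r \<in> J" using J r by auto
  then have r_carrier: "r \<in> kQ_carrier n" using a_subset by auto
  have "sc c (kQ_one n) \<in> carrier (kQ n)" by (simp add: sc_carrier kQ_one_carrier)
  then have "kQ_mult n (sc c (kQ_one n)) r \<in> J" using I_l_closed \<open>r \<in> J\<close> by simp
  then show "sc c r \<in> J" using kQ_mult_sc_one[OF n r_carrier] by simp
qed

lemma ideal_kQ_subset:
  assumes "ideal J (kQ n)" shows "J \<subseteq> kQ_carrier n"
proof -
  interpret ideal J "kQ n" by (rule assms)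
  show ?thesis using a_subset by simp
qed

text \<open>We never prove that kQ is a ring. If it were not, it would have no ideals, every
  generated ideal would be UNIV and all quotients trivial; this dichotomy is carried along
  instead.\<close>
lemma genideal_kQ_cases: "genideal (kQ n) S \<subseteq> kQ_carrier n \<or> genideal (kQ n) S = UNIV"
proof (cases "\<exists>J. ideal J (kQ n) \<and> S \<subseteq> J")
  case True
  then obtain J where J: "ideal J (kQ n)" "S \<subseteq> J" by auto
  then have "genideal (kQ n) S \<subseteq> J" unfolding genideal_def by auto
  then show ?thesis using ideal_kQ_subset[OF J(1)] by auto
qed (auto simp: genideal_def)

lemma rels_eq_image: "rels n \<alpha> \<beta> \<gamma> = rel1 n \<alpha> \<beta> \<gamma> ` {..<n} \<union> rel2 n \<alpha> \<beta> \<gamma> ` {..<n}"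
  by (auto simp: rels_def)

lemma a_r_coset_kQ: "H +>\<^bsub>kQ n\<^esub> x = (\<Union>h\<in>H. {\<lambda>p. h p + x p})"
  by (simp add: a_r_coset_def')

lemma a_r_coset_kQ_subset:
  "I \<subseteq> kQ_carrier n \<Longrightarrow> a \<in> kQ_carrier n \<Longrightarrow> I +>\<^bsub>kQ n\<^esub> a \<subseteq> kQ_carrier n"
  by (auto simp: a_r_coset_kQ intro!: kQ_carrier_add)

lemma a_r_coset_UNIV_kQ: "(UNIV :: (path \<Rightarrow> 'a::field) set) +>\<^bsub>kQ n\<^esub> x = UNIV"
proof -
  have "z \<in> (\<Union>h\<in>UNIV. {\<lambda>p. h p + x p})" for z :: "path \<Rightarrow> 'a"
    by (rule UN_I[of "\<lambda>p. z p - x p"]) auto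
  then show ?thesis by (auto simp: a_r_coset_kQ)
qed

lemma kQ_Quot_simps:
  "carrier (kQ n Quot J) = {J +>\<^bsub>kQ n\<^esub> a | a. a \<in> kQ_carrier n}"
  "X \<otimes>\<^bsub>kQ n Quot J\<^esub> Y = (\<Union>a\<in>X. \<Union>b\<in>Y. J +>\<^bsub>kQ n\<^esub> kQ_mult n a b)"
  "X \<oplus>\<^bsub>kQ n Quot J\<^esub> Y = (\<Union>a\<in>X. \<Union>b\<in>Y. {\<lambda>p. a p + b p})"
  "\<one>\<^bsub>kQ n Quot J\<^esub> = J +>\<^bsub>kQ n\<^esub> kQ_one n"
  by (auto simp: FactRing_def A_RCOSETS_def' rcoset_mult_def set_add_def')

section \<open>Weighted path maps\<close>

fun map_path :: "(arr \<Rightarrow> arr) \<Rightarrow> (nat \<Rightarrow> nat) \<Rightarrow> path \<Rightarrow> path" where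
  "map_path s t (Triv i) = Triv (t i)"
| "map_path s t (Path as) = Path (map s as)"

fun path_weight :: "(arr \<Rightarrow> 'a::field) \<Rightarrow> path \<Rightarrow> 'a" where
  "path_weight w (Triv i) = 1"
| "path_weight w (Path as) = prod_list (map w as)"

lemma map_path_pcat: "map_path s t (pcat p q) = pcat (map_path s t p) (map_path s t q)"
  by (cases "(p, q)" rule: pcat.cases) auto

lemma path_weight_pcat: "path_weight w (pcat p q) = path_weight w p * path_weight w q"
  by (cases "(p, q)" rule: pcat.cases) auto

lemma path_weight_one [simp]: "path_weight (\<lambda>_. 1) p = 1"
  by (cases p) (simp_all add: map_replicate_const)

lemma path_weight_nonzero: "(\<And>a. w a \<noteq> 0) \<Longrightarrow> path_weight w p \<noteq> 0"
  by (cases p) (auto simp: prod_list_zero_iff)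

lemma path_weight_inverse: "path_weight (\<lambda>a. inverse (w a)) p = inverse (path_weight w p)"
proof (cases p)
  case (Path as)
  show ?thesis unfolding Path by (induction as) (simp_all add: inverse_mult_distrib)
qed simp

text \<open>If \<open>map_path s t\<close> is the inverse of a path map \<sigma>, then \<open>twist s t w\<close> sends the basis
  element of p to w(p) times that of \<sigma>(p); it is expressed through the inverse to be pointwise.\<close>
definition twist ::
    "(arr \<Rightarrow> arr) \<Rightarrow> (nat \<Rightarrow> nat) \<Rightarrow> (arr \<Rightarrow> 'a::field) \<Rightarrow> (path \<Rightarrow> 'a) \<Rightarrow> path \<Rightarrow> 'a"
  where "twist s t w f = (\<lambda>q. path_weight w (map_path s t q) * f (map_path s t q))"

locale weighted_quiver_automorphism =
  fixes n :: nat and s :: "arr \<Rightarrow> arr" and t :: "nat \<Rightarrow> nat"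
    and s' :: "arr \<Rightarrow> arr" and t' :: "nat \<Rightarrow> nat" and w :: "arr \<Rightarrow> 'a::field"
  assumes n_pos: "0 < n"
    and arr_inverse: "\<And>a. s' (s a) = a" "\<And>a. s (s' a) = a"
    and vertex_inverse: "\<And>i. t' (t i) = i" "\<And>i. t (t' i) = i"
    and arr_map: "\<And>a. aidx a < n \<Longrightarrow>
      aidx (s a) < n \<and> asrc n (s a) = t (asrc n a) \<and> atgt n (s a) = t (atgt n a)"
    and arr_map_inverse: "\<And>a. aidx a < n \<Longrightarrow>
      aidx (s' a) < n \<and> asrc n (s' a) = t' (asrc n a) \<and> atgt n (s' a) = t' (atgt n a)"
    and vertex_map: "\<And>i. i < n \<Longrightarrow> t i < n"
    and vertex_map_inverse: "\<And>i. i < n \<Longrightarrow> t' i < n"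
    and weight_nonzero: "\<And>a. w a \<noteq> 0"
begin

abbreviation "\<sigma> \<equiv> map_path s t"
abbreviation "\<sigma>' \<equiv> map_path s' t'"
abbreviation "\<Phi> \<equiv> twist s' t' w"

lemma map_path_inverse [simp]: "\<sigma>' (\<sigma> p) = p" "\<sigma> (\<sigma>' p) = p"
  by (cases p; simp add: arr_inverse vertex_inverse comp_def)+

lemma map_path_eq_iff: "\<sigma> p = \<sigma> q \<longleftrightarrow> p = q"
  by (metis map_path_inverse(1))

lemma map_path_inverse_eq_iff: "\<sigma>' q = p \<longleftrightarrow> q = \<sigma> p"
  by auto

lemma composable_map:
  "(\<forall>a\<in>set as. aidx a < n) \<Longrightarrow> composable n as \<Longrightarrow> composable n (map s as)"
  by (induction as rule: induct_list012) (auto simp: arr_map)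

lemma valid_map_path: "valid_path n p \<Longrightarrow> valid_path n (\<sigma> p)"
  by (cases p) (auto simp: vertex_map arr_map composable_map)

lemma pcomp_map_path:
  assumes "valid_path n p" "valid_path n q"
  shows "pcomp n (\<sigma> p) (\<sigma> q) = Some (\<sigma> r) \<longleftrightarrow> pcomp n p q = Some r"
proof -
  have "ptgt n (\<sigma> p) = t (ptgt n p)" "psrc n (\<sigma> q) = t (psrc n q)"
    using assms by (cases p; cases q; auto simp: last_map hd_map arr_map)+
  then show ?thesis
    by (auto simp: pcomp_def map_path_pcat[symmetric] map_path_eq_iff) (metis vertex_inverse(1))
qed

lemma twist_map_path [simp]: "\<Phi> f (\<sigma> p) = path_weight w p * f p"
  by (simp add: twist_def)

lemma twist_carrier: "f \<in> kQ_carrier n \<Longrightarrow> \<Phi> f \<in> kQ_carrier n"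
proof -
  assume f: "f \<in> kQ_carrier n"
  have "{q. \<Phi> f q \<noteq> 0} \<subseteq> \<sigma> ` {p. f p \<noteq> 0}"
  proof
    fix q assume "q \<in> {q. \<Phi> f q \<noteq> 0}"
    then have "f (\<sigma>' q) \<noteq> 0" by (auto simp: twist_def)
    then show "q \<in> \<sigma> ` {p. f p \<noteq> 0}" by (intro rev_image_eqI[of "\<sigma>' q"]) simp_all
  qed
  moreover have "\<Phi> f q \<noteq> 0 \<Longrightarrow> valid_path n q" for q
    using f valid_map_path[of "\<sigma>' q"] by (auto simp: twist_def kQ_carrier_def)
  ultimately show ?thesis using f unfolding kQ_carrier_def by (auto intro: finite_subset)
qed

lemma twist_add: "\<Phi> (\<lambda>p. f p + g p) = (\<lambda>p. \<Phi> f p + \<Phi> g p)"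
  by (auto simp: twist_def algebra_simps)

lemma twist_diff: "\<Phi> (\<lambda>p. f p - g p) = (\<lambda>p. \<Phi> f p - \<Phi> g p)"
  by (auto simp: twist_def algebra_simps)

lemma twist_scale: "\<Phi> (\<lambda>p. c * f p) = (\<lambda>p. c * \<Phi> f p)"
  by (auto simp: twist_def algebra_simps)

lemma twist_sc: "\<Phi> (sc c f) = sc c (\<Phi> f)"
  using twist_scale by (simp add: sc_def)

lemma twist_bas: "\<Phi> (bas p) = sc (path_weight w p) (bas (\<sigma> p))"
  by (auto simp: twist_def sc_def bas_def map_path_inverse_eq_iff)

lemma twist_one: "\<Phi> (kQ_one n) = kQ_one n"
proof
  fix q show "\<Phi> (kQ_one n) q = kQ_one n q"
  proof (cases q)
    case (Triv j)
    have "t' j < n \<longleftrightarrow> j < n"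
      using vertex_map[of "t' j"] vertex_map_inverse[of j] by (auto simp: vertex_inverse)
    then show ?thesis using Triv by (simp add: twist_def kQ_one_def)
  qed (simp add: twist_def kQ_one_def)
qed

lemma twist_product_terms:
  assumes f: "f \<in> kQ_carrier n" and g: "g \<in> kQ_carrier n"
  shows "{(a, b). \<Phi> f a \<noteq> 0 \<and> \<Phi> g b \<noteq> 0 \<and> pcomp n a b = Some (\<sigma> p)}
    = map_prod \<sigma> \<sigma> ` {(a, b). f a \<noteq> 0 \<and> g b \<noteq> 0 \<and> pcomp n a b = Some p}"
proof (intro Set.set_eqI iffI)
  have valid: "f a \<noteq> 0 \<Longrightarrow> valid_path n a" "g a \<noteq> 0 \<Longrightarrow> valid_path n a" for a
    using f g by (auto simp: kQ_carrier_def)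
  fix x
  {
    assume "x \<in> {(a, b). \<Phi> f a \<noteq> 0 \<and> \<Phi> g b \<noteq> 0 \<and> pcomp n a b = Some (\<sigma> p)}"
    then obtain a b where x: "x = (\<sigma> a, \<sigma> b)" and ab: "f a \<noteq> 0" "g b \<noteq> 0"
      and "pcomp n (\<sigma> a) (\<sigma> b) = Some (\<sigma> p)"
      by (auto simp: twist_def) (metis map_path_inverse(2))
    then have "pcomp n a b = Some p" using pcomp_map_path valid by blast
    then show "x \<in> map_prod \<sigma> \<sigma> ` {(a, b). f a \<noteq> 0 \<and> g b \<noteq> 0 \<and> pcomp n a b = Some p}"
      unfolding x using ab by auto
  next
    assume "x \<in> map_prod \<sigma> \<sigma> ` {(a, b). f a \<noteq> 0 \<and> g b \<noteq> 0 \<and> pcomp n a b = Some p}"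
    then show "x \<in> {(a, b). \<Phi> f a \<noteq> 0 \<and> \<Phi> g b \<noteq> 0 \<and> pcomp n a b = Some (\<sigma> p)}"
      using pcomp_map_path valid path_weight_nonzero[OF weight_nonzero] by auto
  }
qed

lemma twist_mult:
  assumes f: "f \<in> kQ_carrier n" and g: "g \<in> kQ_carrier n"
  shows "\<Phi> (kQ_mult n f g) = kQ_mult n (\<Phi> f) (\<Phi> g)"
proof
  fix q
  define p where "p = \<sigma>' q"
  have q: "q = \<sigma> p" by (simp add: p_def)
  define S where "S = {(a, b). f a \<noteq> 0 \<and> g b \<noteq> 0 \<and> pcomp n a b = Some p}"
  have "kQ_mult n (\<Phi> f) (\<Phi> g) q = (\<Sum>(a, b)\<in>map_prod \<sigma> \<sigma> ` S. \<Phi> f a * \<Phi> g b)"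
    unfolding kQ_mult_def q S_def twist_product_terms[OF f g] ..
  also have "\<dots> = (\<Sum>(a, b)\<in>S. \<Phi> f (\<sigma> a) * \<Phi> g (\<sigma> b))"
    by (subst sum.reindex) (auto simp: inj_on_def map_path_eq_iff case_prod_beta)
  also have "\<dots> = (\<Sum>(a, b)\<in>S. path_weight w p * (f a * g b))"
  proof (rule sum.cong[OF refl], clarify)
    fix a b assume "(a, b) \<in> S"
    then have "pcat a b = p" by (auto simp: S_def pcomp_def split: if_splits)
    then show "\<Phi> f (\<sigma> a) * \<Phi> g (\<sigma> b) = path_weight w p * (f a * g b)"
      by (auto simp: path_weight_pcat)
  qed
  also have "\<dots> = \<Phi> (kQ_mult n f g) q"
    by (simp add: q kQ_mult_def S_def sum_distrib_left case_prod_beta)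
  finally show "\<Phi> (kQ_mult n f g) q = kQ_mult n (\<Phi> f) (\<Phi> g) q" ..
qed

definition inverse_weight :: "arr \<Rightarrow> 'a" where
  "inverse_weight b = inverse (w (s' b))"

lemma inverse_automorphism: "weighted_quiver_automorphism n s' t' s t inverse_weight"
  by unfold_locales
    (auto simp: n_pos arr_inverse vertex_inverse arr_map arr_map_inverse vertex_map
      vertex_map_inverse inverse_weight_def weight_nonzero)

lemma path_weight_inverse_weight: "path_weight inverse_weight (\<sigma> p) = inverse (path_weight w p)"
proof -
  have "path_weight inverse_weight (\<sigma> p) = path_weight (\<lambda>a. inverse (w a)) p"
    by (cases p) (simp_all add: inverse_weight_def comp_def arr_inverse)
  then show ?thesis by (simp only: path_weight_inverse)
qed

lemma twist_inverse [simp]: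
  "twist s t inverse_weight (\<Phi> f) = f" "\<Phi> (twist s t inverse_weight f) = f"
  by (auto simp: twist_def path_weight_inverse_weight path_weight_nonzero[OF weight_nonzero])

lemma bij_twist: "bij \<Phi>"
  by (rule o_bij[of "twist s t inverse_weight"]) (auto simp: fun_eq_iff)

lemma twist_carrier_iff: "\<Phi> f \<in> kQ_carrier n \<longleftrightarrow> f \<in> kQ_carrier n"
proof -
  interpret inverse: weighted_quiver_automorphism n s' t' s t inverse_weight
    by (rule inverse_automorphism)
  show ?thesis using inverse.twist_carrier twist_carrier by (metis twist_inverse(1))
qed

lemma image_twist_carrier: "\<Phi> ` kQ_carrier n = kQ_carrier n"
proof
  show "\<Phi> ` kQ_carrier n \<subseteq> kQ_carrier n" using twist_carrier by blast
  show "kQ_carrier n \<subseteq> \<Phi> ` kQ_carrier n"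
  proof
    fix g :: "path \<Rightarrow> 'a" assume "g \<in> kQ_carrier n"
    then have "twist s t inverse_weight g \<in> kQ_carrier n"
      using twist_carrier_iff[of "twist s t inverse_weight g"] by simp
    then show "g \<in> \<Phi> ` kQ_carrier n" by (rule rev_image_eqI) simp
  qed
qed

lemma twist_ideal_vimage:
  assumes J: "ideal J (kQ n)"
  shows "ideal {f \<in> kQ_carrier n. \<Phi> f \<in> J} (kQ n)"
proof -
  have ring: "ring (kQ n :: (path \<Rightarrow> 'a) ring)" using J unfolding ideal_def by blast
  have "ring_hom_ring (kQ n) (kQ n) \<Phi>"
    by (intro ring_hom_ringI[OF ring ring])
      (simp_all add: twist_carrier twist_mult twist_add twist_one)
  from ring_hom_ring.ideal_vimage[OF this J] show ?thesis by simp
qed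

lemma twist_genideal_subset:
  assumes "\<Phi> ` S \<subseteq> genideal (kQ n) S'"
  shows "\<Phi> ` genideal (kQ n) S \<subseteq> genideal (kQ n) S'"
proof (rule image_subsetI)
  fix x assume x: "x \<in> genideal (kQ n) S"
  show "\<Phi> x \<in> genideal (kQ n) S'"
    unfolding genideal_def
  proof (rule InterI, clarify)
    fix J assume J: "ideal J (kQ n)" "S' \<subseteq> J"
    have "genideal (kQ n) S' \<subseteq> J" using J unfolding genideal_def by auto
    moreover have "J \<subseteq> kQ_carrier n" using ideal_kQ_subset[OF J(1)] .
    ultimately have "S \<subseteq> {f \<in> kQ_carrier n. \<Phi> f \<in> J}" using assms twist_carrier_iff by blast
    then show "\<Phi> x \<in> J" using x twist_ideal_vimage[OF J(1)] unfolding genideal_def by auto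
  qed
qed

lemma twist_genideal_eq:
  assumes to: "\<And>r. r \<in> S \<Longrightarrow> \<exists>c. \<exists>r'\<in>S'. \<Phi> r = sc c r'"
    and onto: "\<And>r'. r' \<in> S' \<Longrightarrow> \<exists>c. c \<noteq> 0 \<and> (\<exists>r\<in>S. \<Phi> r = sc c r')"
  shows "\<Phi> ` genideal (kQ n) S = genideal (kQ n) S'"
proof
  show "\<Phi> ` genideal (kQ n) S \<subseteq> genideal (kQ n) S'"
    using to sc_mem_genideal[OF n_pos] by (intro twist_genideal_subset) fastforce
  interpret inverse: weighted_quiver_automorphism n s' t' s t inverse_weight
    by (rule inverse_automorphism)
  have "twist s t inverse_weight ` S' \<subseteq> genideal (kQ n) S"
  proof
    fix y assume "y \<in> twist s t inverse_weight ` S'"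
    then obtain r' where r': "r' \<in> S'" "y = twist s t inverse_weight r'" by auto
    obtain c r where cr: "c \<noteq> 0" "r \<in> S" "\<Phi> r = sc c r'" using onto[OF r'(1)] by auto
    have "r' = \<Phi> (sc (inverse c) r)"
      using cr by (simp add: twist_sc) (simp add: sc_def mult.assoc[symmetric])
    then show "y \<in> genideal (kQ n) S" using r'(2) sc_mem_genideal[OF n_pos cr(2)] by simp
  qed
  then have inverse_image: "twist s t inverse_weight ` genideal (kQ n) S' \<subseteq> genideal (kQ n) S"
    by (rule inverse.twist_genideal_subset)
  show "genideal (kQ n) S' \<subseteq> \<Phi> ` genideal (kQ n) S"
  proof
    fix y assume "y \<in> genideal (kQ n) S'"
    then have "twist s t inverse_weight y \<in> genideal (kQ n) S" using inverse_image by blast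
    then show "y \<in> \<Phi> ` genideal (kQ n) S" by (rule rev_image_eqI) simp
  qed
qed

lemma twist_a_r_coset: "\<Phi> ` (I +>\<^bsub>kQ n\<^esub> x) = \<Phi> ` I +>\<^bsub>kQ n\<^esub> \<Phi> x"
  unfolding a_r_coset_kQ image_UN by (simp add: twist_add)

lemma image_twist_Quot_carrier:
  assumes I': "\<Phi> ` I = I'"
  shows "image \<Phi> ` carrier (kQ n Quot I) = carrier (kQ n Quot I')"
proof -
  have "image \<Phi> ` carrier (kQ n Quot I) = (\<lambda>a. \<Phi> ` I +>\<^bsub>kQ n\<^esub> \<Phi> a) ` kQ_carrier n"
    unfolding kQ_Quot_simps(1) Setcompr_eq_image image_image twist_a_r_coset ..
  also have "\<dots> = (\<lambda>b. I' +>\<^bsub>kQ n\<^esub> b) ` \<Phi> ` kQ_carrier n"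
    unfolding I' by (simp only: image_image)
  finally show ?thesis
    unfolding image_twist_carrier kQ_Quot_simps(1) Setcompr_eq_image .
qed

lemma twist_Quot_mult:
  assumes I': "\<Phi> ` I = I'" and I: "I \<subseteq> kQ_carrier n \<or> I = UNIV"
    and X: "X \<in> carrier (kQ n Quot I)" and Y: "Y \<in> carrier (kQ n Quot I)"
  shows "\<Phi> ` (X \<otimes>\<^bsub>kQ n Quot I\<^esub> Y) = \<Phi> ` X \<otimes>\<^bsub>kQ n Quot I'\<^esub> \<Phi> ` Y"
proof -
  obtain a b where a: "a \<in> kQ_carrier n" "X = I +>\<^bsub>kQ n\<^esub> a"
    and b: "b \<in> kQ_carrier n" "Y = I +>\<^bsub>kQ n\<^esub> b"
    using X Y unfolding kQ_Quot_simps(1) by blast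
  have mult: "I' +>\<^bsub>kQ n\<^esub> \<Phi> (kQ_mult n u v) = I' +>\<^bsub>kQ n\<^esub> kQ_mult n (\<Phi> u) (\<Phi> v)"
    if "u \<in> X" "v \<in> Y" for u v
    using I
  proof
    assume "I \<subseteq> kQ_carrier n"
    then have "u \<in> kQ_carrier n" "v \<in> kQ_carrier n"
      using that a b a_r_coset_kQ_subset by blast+
    then show ?thesis by (simp add: twist_mult)
  next
    assume "I = UNIV"
    then have "I' = range \<Phi>" using I' by simp
    then have "I' = UNIV" using bij_is_surj[OF bij_twist] by simp
    then show ?thesis by (simp only: a_r_coset_UNIV_kQ)
  qed
  have "\<Phi> ` (X \<otimes>\<^bsub>kQ n Quot I\<^esub> Y) = (\<Union>u\<in>X. \<Union>v\<in>Y. I' +>\<^bsub>kQ n\<^esub> \<Phi> (kQ_mult n u v))"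
    unfolding kQ_Quot_simps(2) image_UN twist_a_r_coset I' ..
  also have "\<dots> = (\<Union>u\<in>X. \<Union>v\<in>Y. I' +>\<^bsub>kQ n\<^esub> kQ_mult n (\<Phi> u) (\<Phi> v))"
    using mult by (intro SUP_cong refl) simp
  also have "\<dots> = \<Phi> ` X \<otimes>\<^bsub>kQ n Quot I'\<^esub> \<Phi> ` Y"
    unfolding kQ_Quot_simps(2) by simp
  finally show ?thesis .
qed

lemma twist_quotient_iso:
  assumes I': "\<Phi> ` I = I'" and I: "I \<subseteq> kQ_carrier n \<or> I = UNIV"
  shows "image \<Phi> \<in> ring_iso (kQ n Quot I) (kQ n Quot I')"
proof (rule ring_iso_memI)
  note image_carrier = image_twist_Quot_carrier[OF I']
  show "image \<Phi> X \<in> carrier (kQ n Quot I')" if "X \<in> carrier (kQ n Quot I)" for X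
    using imageI[OF that, of "image \<Phi>"] unfolding image_carrier .
  have "inj (image \<Phi>)"
    using bij_twist by (intro injI) (simp add: inj_image_eq_iff bij_is_inj)
  then show "bij_betw (image \<Phi>) (carrier (kQ n Quot I)) (carrier (kQ n Quot I'))"
    unfolding bij_betw_def image_carrier by (blast intro: inj_on_subset)
  show "\<Phi> ` \<one>\<^bsub>kQ n Quot I\<^esub> = \<one>\<^bsub>kQ n Quot I'\<^esub>"
    unfolding kQ_Quot_simps(4) twist_a_r_coset I' twist_one ..
  show "\<Phi> ` (X \<oplus>\<^bsub>kQ n Quot I\<^esub> Y) = \<Phi> ` X \<oplus>\<^bsub>kQ n Quot I'\<^esub> \<Phi> ` Y" for X Y
    unfolding kQ_Quot_simps(3) image_UN by (simp add: twist_add)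
  show "\<Phi> ` (X \<otimes>\<^bsub>kQ n Quot I\<^esub> Y) = \<Phi> ` X \<otimes>\<^bsub>kQ n Quot I'\<^esub> \<Phi> ` Y"
    if "X \<in> carrier (kQ n Quot I)" "Y \<in> carrier (kQ n Quot I)" for X Y
    using twist_Quot_mult[OF I' I that] .
qed

lemma extends_to_iso_twist:
  assumes rel1: "\<And>i. i < n \<Longrightarrow> c i \<noteq> 0 \<and> \<Phi> (rel1 n \<alpha> \<beta> \<gamma> i) = sc (c i) (\<rho>\<^sub>1 i)"
    and rel2: "\<And>i. i < n \<Longrightarrow> d i \<noteq> 0 \<and> \<Phi> (rel2 n \<alpha> \<beta> \<gamma> i) = sc (d i) (\<rho>\<^sub>2 i)"
    and rels': "\<rho>\<^sub>1 ` {..<n} \<union> \<rho>\<^sub>2 ` {..<n} = rels n \<alpha>' \<beta>' \<gamma>'"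
    and E: "\<And>i. i < n \<Longrightarrow> \<Phi> (ev i) = E i"
    and U: "\<And>i. i < n \<Longrightarrow> \<Phi> (uv i) = Uu i"
    and D: "\<And>i. i < n \<Longrightarrow> \<Phi> (dv i) = Dd i"
  shows "extends_to_iso n \<alpha> \<beta> \<gamma> \<alpha>' \<beta>' \<gamma>' E Uu Dd"
proof -
  have "\<Phi> ` Irel n \<alpha> \<beta> \<gamma> = Irel n \<alpha>' \<beta>' \<gamma>'"
    unfolding Irel_def
  proof (rule twist_genideal_eq)
    show "\<exists>c. \<exists>r'\<in>rels n \<alpha>' \<beta>' \<gamma>'. \<Phi> r = sc c r'" if "r \<in> rels n \<alpha> \<beta> \<gamma>" for r
      using that rel1 rel2 unfolding rels_eq_image[of n \<alpha>] rels'[symmetric] by blast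
    show "\<exists>c. c \<noteq> 0 \<and> (\<exists>r\<in>rels n \<alpha> \<beta> \<gamma>. \<Phi> r = sc c r')" if "r' \<in> rels n \<alpha>' \<beta>' \<gamma>'" for r'
      using that rel1 rel2 unfolding rels_eq_image[of n \<alpha>] rels'[symmetric] by blast
  qed
  then have iso: "image \<Phi> \<in> ring_iso (HH n \<alpha> \<beta> \<gamma>) (HH n \<alpha>' \<beta>' \<gamma>')"
    unfolding HH_def Irel_def by (intro twist_quotient_iso genideal_kQ_cases)
  have cls: "\<Phi> ` cls n \<alpha> \<beta> \<gamma> x = cls n \<alpha>' \<beta>' \<gamma>' (\<Phi> x)" for x
    unfolding cls_def twist_a_r_coset \<open>\<Phi> ` Irel n \<alpha> \<beta> \<gamma> = Irel n \<alpha>' \<beta>' \<gamma>'\<close> ..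
  show ?thesis
    unfolding extends_to_iso_def
  proof (intro exI[of _ "image \<Phi>"] conjI allI impI)
    show "\<Phi> ` cls n \<alpha> \<beta> \<gamma> (sc c (kQ_one n)) = cls n \<alpha>' \<beta>' \<gamma>' (sc c (kQ_one n))" for c
      by (simp only: cls twist_sc twist_one)
  qed (simp_all only: iso cls E U D)
qed

end

lemma weighted_quiver_automorphismI:
  fixes w :: "arr \<Rightarrow> 'a::field"
  assumes "0 < n"
    and "\<And>i. s' (s (U i)) = U i" "\<And>i. s' (s (D i)) = D i"
    and "\<And>i. s (s' (U i)) = U i" "\<And>i. s (s' (D i)) = D i"
    and "\<And>i. t' (t i) = i" "\<And>i. t (t' i) = i"
    and "\<And>i. i < n \<Longrightarrow> aidx (s (U i)) < n \<and> asrc n (s (U i)) = t i \<and> atgt n (s (U i)) = t (nx n i)"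
    and "\<And>i. i < n \<Longrightarrow> aidx (s (D i)) < n \<and> asrc n (s (D i)) = t (nx n i) \<and> atgt n (s (D i)) = t i"
    and "\<And>i. i < n \<Longrightarrow> aidx (s' (U i)) < n \<and> asrc n (s' (U i)) = t' i \<and> atgt n (s' (U i)) = t' (nx n i)"
    and "\<And>i. i < n \<Longrightarrow> aidx (s' (D i)) < n \<and> asrc n (s' (D i)) = t' (nx n i) \<and> atgt n (s' (D i)) = t' i"
    and "\<And>i. i < n \<Longrightarrow> t i < n" "\<And>i. i < n \<Longrightarrow> t' i < n"
    and "\<And>a. w a \<noteq> 0"
  shows "weighted_quiver_automorphism n s t s' t' w"
proof unfold_locales
  fix a show "s' (s a) = a" "s (s' a) = a" by (cases a; use assms in auto)+
next
  fix a assume "aidx a < n"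
  then show "aidx (s a) < n \<and> asrc n (s a) = t (asrc n a) \<and> atgt n (s a) = t (atgt n a)"
    and "aidx (s' a) < n \<and> asrc n (s' a) = t' (asrc n a) \<and> atgt n (s' a) = t' (atgt n a)"
    by (cases a; use assms in auto)+
qed (use assms in auto)

section \<open>The three automorphisms\<close>

lemma nx_less [simp]: "0 < n \<Longrightarrow> nx n i < n"
  by (simp add: nx_def)

lemma pr_less [simp]: "0 < n \<Longrightarrow> pr n i < n"
  by (simp add: pr_def)

lemma nx_pr [simp]: "i < n \<Longrightarrow> nx n (pr n i) = i"
  by (cases i) (auto simp: nx_def pr_def mod_Suc)

lemma pr_nx [simp]: "i < n \<Longrightarrow> pr n (nx n i) = i"
  by (cases "Suc i = n") (auto simp: nx_def pr_def)

lemma image_nx_lessThan: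
  assumes "0 < n" shows "nx n ` {..<n} = {..<n}"
proof
  show "nx n ` {..<n} \<subseteq> {..<n}" using assms by auto
  show "{..<n} \<subseteq> nx n ` {..<n}"
  proof
    fix i assume "i \<in> {..<n}"
    then show "i \<in> nx n ` {..<n}" using assms by (intro rev_image_eqI[of "pr n i"]) simp_all
  qed
qed

lemma image_reflect_lessThan: "(\<lambda>i. n - Suc i) ` {..<n} = {..<n}"
proof
  show "(\<lambda>i. n - Suc i) ` {..<n} \<subseteq> {..<n}" by auto
  show "{..<n} \<subseteq> (\<lambda>i. n - Suc i) ` {..<n}"
  proof
    fix i assume "i \<in> {..<n}"
    then show "i \<in> (\<lambda>i. n - Suc i) ` {..<n}" by (intro rev_image_eqI[of "n - Suc i"]) auto
  qed
qed

lemma image_nx_comp: "0 < n \<Longrightarrow> (\<lambda>i. f (nx n i)) ` {..<n} = f ` {..<n}"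
  using image_image[of f "nx n" "{..<n}"] image_nx_lessThan by simp

lemma image_reflect_comp: "(\<lambda>i. f (n - Suc i)) ` {..<n} = f ` {..<n}"
  using image_image[of f "\<lambda>i. n - Suc i" "{..<n}"] image_reflect_lessThan by simp

lemma nx_reflect: "i < n \<Longrightarrow> nx n (n - Suc i) = n - Suc (pr n i)"
  by (cases i) (auto simp: nx_def pr_def Suc_diff_Suc)

lemma pr_reflect: "i < n \<Longrightarrow> pr n (n - Suc i) = n - Suc (nx n i)"
proof (cases "Suc i = n")
  case False
  assume "i < n"
  then have "Suc i < n" using False by simp
  then have "pr n (n - Suc i) = (n - Suc (Suc i) + n) mod n"
    unfolding pr_def by (intro arg_cong[where f = "\<lambda>x. x mod n"]) arith
  also have "\<dots> = n - Suc (Suc i)" using \<open>Suc i < n\<close> by (simp only: mod_add_self2) simp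
  also have "\<dots> = n - Suc (nx n i)" using \<open>Suc i < n\<close> by (simp add: nx_def)
  finally show ?thesis .
qed (simp add: nx_def pr_def)

lemma nx_reflect_mod: "i < n \<Longrightarrow> nx n (n - Suc i) = (n - i) mod n"
  by (simp add: nx_def Suc_diff_Suc)

lemma reflect_mod_nx: "i < n \<Longrightarrow> (n - nx n i) mod n = n - Suc i"
  by (cases "Suc i = n") (auto simp: nx_def)

lemma reflect_mod_reflect_mod: "(i::nat) < n \<Longrightarrow> (n - (n - i) mod n) mod n = i"
  by (cases "i = 0") auto

text \<open>Only indices below n are moved, so that a permutation of {..<n} yields a bijection
  of all arrows and vertices, as the locale requires.\<close>
definition relabel_vertex :: "nat \<Rightarrow> (nat \<Rightarrow> nat) \<Rightarrow> nat \<Rightarrow> nat" where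
  "relabel_vertex n f i = (if i < n then f i else i)"

definition relabel_arr :: "nat \<Rightarrow> (nat \<Rightarrow> nat) \<Rightarrow> arr \<Rightarrow> arr" where
  "relabel_arr n f a = (case a of U i \<Rightarrow> U (relabel_vertex n f i) | D i \<Rightarrow> D (relabel_vertex n f i))"

definition reflect_arr :: "nat \<Rightarrow> arr \<Rightarrow> arr" where
  "reflect_arr n a = (case a of
      U i \<Rightarrow> if i < n then D (n - Suc i) else U i
    | D i \<Rightarrow> if i < n then U (n - Suc i) else D i)"

definition u_weight :: "nat \<Rightarrow> (nat \<Rightarrow> 'a::field) \<Rightarrow> arr \<Rightarrow> 'a" where
  "u_weight n lam a = (case a of U i \<Rightarrow> if i < n then lam i else 1 | D i \<Rightarrow> 1)"

lemma relabel_arr_simps [simp]: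
  "relabel_arr n f (U i) = U (relabel_vertex n f i)"
  "relabel_arr n f (D i) = D (relabel_vertex n f i)"
  by (simp_all add: relabel_arr_def)

lemma reflect_arr_simps [simp]:
  "reflect_arr n (U i) = (if i < n then D (n - Suc i) else U i)"
  "reflect_arr n (D i) = (if i < n then U (n - Suc i) else D i)"
  by (simp_all add: reflect_arr_def)

lemma u_weight_simps [simp]:
  "u_weight n lam (U i) = (if i < n then lam i else 1)"
  "u_weight n lam (D i) = 1"
  by (simp_all add: u_weight_def)

lemma rescaling_extends_to_iso:
  fixes \<alpha> \<beta> \<gamma> lam :: "nat \<Rightarrow> 'a::field"
  assumes n: "0 < n" and lam: "\<forall>i<n. lam i \<noteq> 0"
  shows "extends_to_iso n \<alpha> \<beta> \<gamma>
          (\<lambda>i. lam i * inverse (lam (pr n i)) * \<alpha> i)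
          (\<lambda>i. lam (nx n i) * inverse (lam (pr n i)) * \<beta> i)
          (\<lambda>i. inverse (lam (pr n i)) * \<gamma> i)
          (\<lambda>i. ev i) (\<lambda>i. sc (lam i) (uv i)) (\<lambda>i. dv i)"
proof -
  interpret \<phi>: weighted_quiver_automorphism n id id id id "u_weight n lam"
    using n lam by (intro weighted_quiver_automorphismI) (auto simp: u_weight_def split: arr.splits)
  define \<alpha>' where "\<alpha>' = (\<lambda>i. lam i * inverse (lam (pr n i)) * \<alpha> i)"
  define \<beta>' where "\<beta>' = (\<lambda>i. lam (nx n i) * inverse (lam (pr n i)) * \<beta> i)"
  define \<gamma>' where "\<gamma>' = (\<lambda>i. inverse (lam (pr n i)) * \<gamma> i)"
  have lam_nonzero: "lam (pr n i) \<noteq> 0" "lam (nx n i) \<noteq> 0" for i using lam n by simp_all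
  have "extends_to_iso n \<alpha> \<beta> \<gamma> \<alpha>' \<beta>' \<gamma>' (\<lambda>i. ev i) (\<lambda>i. sc (lam i) (uv i)) (\<lambda>i. dv i)"
  proof (rule \<phi>.extends_to_iso_twist)
    show "lam (pr n i) * lam i \<noteq> 0 \<and>
        \<phi>.\<Phi> (rel1 n \<alpha> \<beta> \<gamma> i) = sc (lam (pr n i) * lam i) (rel1 n \<alpha>' \<beta>' \<gamma>' i)" if "i < n" for i
      unfolding rel1_def \<phi>.twist_diff \<phi>.twist_scale \<phi>.twist_bas
      using that lam_nonzero lam by (auto simp: \<alpha>'_def \<beta>'_def \<gamma>'_def sc_def fun_eq_iff field_simps)
    show "lam (pr n i) \<noteq> 0 \<and> \<phi>.\<Phi> (rel2 n \<alpha> \<beta> \<gamma> i) = sc (lam (pr n i)) (rel2 n \<alpha>' \<beta>' \<gamma>' i)"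
      if "i < n" for i
      unfolding rel2_def \<phi>.twist_diff \<phi>.twist_scale \<phi>.twist_bas
      using that lam_nonzero by (auto simp: \<alpha>'_def \<beta>'_def \<gamma>'_def sc_def fun_eq_iff field_simps)
    show "rel1 n \<alpha>' \<beta>' \<gamma>' ` {..<n} \<union> rel2 n \<alpha>' \<beta>' \<gamma>' ` {..<n} = rels n \<alpha>' \<beta>' \<gamma>'"
      by (rule rels_eq_image[symmetric])
  qed (simp_all add: ev_def uv_def dv_def \<phi>.twist_bas)
  then show ?thesis unfolding \<alpha>'_def \<beta>'_def \<gamma>'_def .
qed

lemma rotation_extends_to_iso:
  fixes \<alpha> \<beta> \<gamma> :: "nat \<Rightarrow> 'a::field"
  assumes n: "0 < n"
  shows "extends_to_iso n \<alpha> \<beta> \<gamma> (\<lambda>i. \<alpha> (pr n i)) (\<lambda>i. \<beta> (pr n i)) (\<lambda>i. \<gamma> (pr n i))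
          (\<lambda>i. ev (nx n i)) (\<lambda>i. uv (nx n i)) (\<lambda>i. dv (nx n i))"
proof -
  interpret \<psi>: weighted_quiver_automorphism n "relabel_arr n (nx n)" "relabel_vertex n (nx n)"
      "relabel_arr n (pr n)" "relabel_vertex n (pr n)" "\<lambda>_. 1::'a"
    using n by (intro weighted_quiver_automorphismI) (auto simp: relabel_vertex_def)
  define \<alpha>' where "\<alpha>' = (\<lambda>i. \<alpha> (pr n i))"
  define \<beta>' where "\<beta>' = (\<lambda>i. \<beta> (pr n i))"
  define \<gamma>' where "\<gamma>' = (\<lambda>i. \<gamma> (pr n i))"
  have "extends_to_iso n \<alpha> \<beta> \<gamma> \<alpha>' \<beta>' \<gamma>' (\<lambda>i. ev (nx n i)) (\<lambda>i. uv (nx n i)) (\<lambda>i. dv (nx n i))"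
  proof (rule \<psi>.extends_to_iso_twist)
    show "(1::'a) \<noteq> 0 \<and> \<psi>.\<Phi> (rel1 n \<alpha> \<beta> \<gamma> i) = sc 1 (rel1 n \<alpha>' \<beta>' \<gamma>' (nx n i))" if "i < n" for i
      using that n by (simp add: rel1_def \<alpha>'_def \<beta>'_def \<gamma>'_def sc_def relabel_vertex_def
          \<psi>.twist_diff \<psi>.twist_scale \<psi>.twist_bas)
    show "(1::'a) \<noteq> 0 \<and> \<psi>.\<Phi> (rel2 n \<alpha> \<beta> \<gamma> i) = sc 1 (rel2 n \<alpha>' \<beta>' \<gamma>' (nx n i))" if "i < n" for i
      using that n by (simp add: rel2_def \<alpha>'_def \<beta>'_def \<gamma>'_def sc_def relabel_vertex_def
          \<psi>.twist_diff \<psi>.twist_scale \<psi>.twist_bas)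
    show "(\<lambda>i. rel1 n \<alpha>' \<beta>' \<gamma>' (nx n i)) ` {..<n} \<union> (\<lambda>i. rel2 n \<alpha>' \<beta>' \<gamma>' (nx n i)) ` {..<n}
        = rels n \<alpha>' \<beta>' \<gamma>'"
      unfolding rels_eq_image image_nx_comp[OF n] ..
  qed (simp_all add: ev_def uv_def dv_def relabel_vertex_def \<psi>.twist_bas)
  then show ?thesis unfolding \<alpha>'_def \<beta>'_def \<gamma>'_def .
qed

lemma reflection_extends_to_iso:
  fixes \<alpha> \<beta> \<gamma> :: "nat \<Rightarrow> 'a::field"
  assumes n: "0 < n" and \<beta>: "\<forall>i<n. \<beta> i \<noteq> 0"
  shows "extends_to_iso n \<alpha> \<beta> \<gamma>
          (\<lambda>i. - inverse (\<beta> (n - i - 1)) * \<alpha> (n - i - 1))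
          (\<lambda>i. inverse (\<beta> (n - i - 1)))
          (\<lambda>i. - inverse (\<beta> (n - i - 1)) * \<gamma> (n - i - 1))
          (\<lambda>i. ev ((n - i) mod n)) (\<lambda>i. dv (n - i - 1)) (\<lambda>i. uv (n - i - 1))"
proof -
  let ?t = "relabel_vertex n (\<lambda>i. (n - i) mod n)"
  interpret \<pi>: weighted_quiver_automorphism n "reflect_arr n" ?t "reflect_arr n" ?t "\<lambda>_. 1::'a"
    using n by (intro weighted_quiver_automorphismI)
      (auto simp: relabel_vertex_def nx_reflect_mod reflect_mod_nx reflect_mod_reflect_mod)
  define \<alpha>' where "\<alpha>' = (\<lambda>i. - inverse (\<beta> (n - i - 1)) * \<alpha> (n - i - 1))"
  define \<beta>' where "\<beta>' = (\<lambda>i. inverse (\<beta> (n - i - 1)))"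
  define \<gamma>' where "\<gamma>' = (\<lambda>i. - inverse (\<beta> (n - i - 1)) * \<gamma> (n - i - 1))"
  have "extends_to_iso n \<alpha> \<beta> \<gamma> \<alpha>' \<beta>' \<gamma>'
      (\<lambda>i. ev ((n - i) mod n)) (\<lambda>i. dv (n - i - 1)) (\<lambda>i. uv (n - i - 1))"
  proof (rule \<pi>.extends_to_iso_twist)
    show "- \<beta> i \<noteq> 0 \<and> \<pi>.\<Phi> (rel1 n \<alpha> \<beta> \<gamma> i) = sc (- \<beta> i) (rel2 n \<alpha>' \<beta>' \<gamma>' (n - Suc i))"
      if "i < n" for i
      unfolding rel1_def rel2_def \<pi>.twist_diff \<pi>.twist_scale \<pi>.twist_bas
      using that \<beta> by (auto simp: \<alpha>'_def \<beta>'_def \<gamma>'_def sc_def nx_reflect pr_reflect fun_eq_iff field_simps)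
    show "- \<beta> i \<noteq> 0 \<and> \<pi>.\<Phi> (rel2 n \<alpha> \<beta> \<gamma> i) = sc (- \<beta> i) (rel1 n \<alpha>' \<beta>' \<gamma>' (n - Suc i))"
      if "i < n" for i
      unfolding rel1_def rel2_def \<pi>.twist_diff \<pi>.twist_scale \<pi>.twist_bas
      using that \<beta> by (auto simp: \<alpha>'_def \<beta>'_def \<gamma>'_def sc_def nx_reflect pr_reflect fun_eq_iff field_simps)
    show "(\<lambda>i. rel2 n \<alpha>' \<beta>' \<gamma>' (n - Suc i)) ` {..<n} \<union> (\<lambda>i. rel1 n \<alpha>' \<beta>' \<gamma>' (n - Suc i)) ` {..<n}
        = rels n \<alpha>' \<beta>' \<gamma>'"
      unfolding rels_eq_image image_reflect_comp by (rule Un_commute)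
  qed (simp_all add: ev_def uv_def dv_def relabel_vertex_def \<pi>.twist_bas)
  then show ?thesis unfolding \<alpha>'_def \<beta>'_def \<gamma>'_def .
qed

theorem lemma5p1:
  fixes n :: nat and \<alpha> \<beta> \<gamma> :: "nat \<Rightarrow> 'a::{alg_closed_field, field_char_0}"
  assumes "n \<ge> 1"
  shows
    "(\<forall>lam :: nat \<Rightarrow> 'a. (\<forall>i<n. lam i \<noteq> 0) \<longrightarrow>
        extends_to_iso n \<alpha> \<beta> \<gamma>
          (\<lambda>i. lam i * inverse (lam (pr n i)) * \<alpha> i)
          (\<lambda>i. lam (nx n i) * inverse (lam (pr n i)) * \<beta> i)
          (\<lambda>i. inverse (lam (pr n i)) * \<gamma> i)
          (\<lambda>i. ev i) (\<lambda>i. sc (lam i) (uv i)) (\<lambda>i. dv i))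
   \<and> extends_to_iso n \<alpha> \<beta> \<gamma>
          (\<lambda>i. \<alpha> (pr n i)) (\<lambda>i. \<beta> (pr n i)) (\<lambda>i. \<gamma> (pr n i))
          (\<lambda>i. ev (nx n i)) (\<lambda>i. uv (nx n i)) (\<lambda>i. dv (nx n i))
   \<and> ((\<forall>i<n. \<beta> i \<noteq> 0) \<longrightarrow>
        extends_to_iso n \<alpha> \<beta> \<gamma>
          (\<lambda>i. - inverse (\<beta> (n - i - 1)) * \<alpha> (n - i - 1))
          (\<lambda>i. inverse (\<beta> (n - i - 1)))
          (\<lambda>i. - inverse (\<beta> (n - i - 1)) * \<gamma> (n - i - 1))
          (\<lambda>i. ev ((n - i) mod n)) (\<lambda>i. dv (n - i - 1)) (\<lambda>i. uv (n - i - 1)))"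
proof -
  have n: "0 < n" using assms by simp
  show ?thesis
    using rescaling_extends_to_iso[OF n] rotation_extends_to_iso[OF n]
      reflection_extends_to_iso[OF n] by blast
qed

end
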